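(* Let $X$ be a finite set and let $\tau\subseteq\binom{X}{2}$ be non-empty with $L(\tau)=X$. Then $\tau$ is thin (i.e. $|L(\tau')|\ge|\tau'|+1$ for every non-empty $\tau'\subseteq\tau$) if and only if the bipartite graph $G(\tau)$ is a forest.
   Context: $L(\tau)=\bigcup_{s\in\tau}s$. $G(\tau)$ is the bipartite graph with vertex set $\tau\cup L(\tau)$ (the two sides) in which $t\in\tau$ and $x\in L(\tau)$ are adjacent if and only if $x\in t$. *)

theory Defs
  imports Main
begin

definition L :: "'a set set \<Rightarrow> 'a set" where
  "L \<tau> = \<Union>\<tau>"

definition thin :: "'a set set \<Rightarrow> bool" where
  "thin \<tau> \<longleftrightarrow> (\<forall>\<tau>'. \<tau>' \<subseteq> \<tau> \<and> \<tau>' \<noteq> {} \<longrightarrow> card (L \<tau>') \<ge> card \<tau>' + 1)"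

definition G_adj :: "'a set set \<Rightarrow> ('a set + 'a) \<Rightarrow> ('a set + 'a) \<Rightarrow> bool" where
  "G_adj \<tau> u v \<longleftrightarrow> (\<exists>t x. t \<in> \<tau> \<and> x \<in> t \<and>
      ((u = Inl t \<and> v = Inr x) \<or> (u = Inr x \<and> v = Inl t)))"

definition has_cycle :: "('v \<Rightarrow> 'v \<Rightarrow> bool) \<Rightarrow> bool" where
  "has_cycle adj \<longleftrightarrow> (\<exists>vs. length vs \<ge> 3 \<and> distinct vs \<and>
      (\<forall>i < length vs. adj (vs ! i) (vs ! ((i + 1) mod length vs))))"

definition is_forest :: "('v \<Rightarrow> 'v \<Rightarrow> bool) \<Rightarrow> bool" where
  "is_forest adj \<longleftrightarrow> \<not> has_cycle adj"

end

theory Submission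
  imports Defs
begin

(* G(tau) is the subdivision of the graph with edge set tau. A cycle in G(tau) alternates
   between members of tau and points; every member on it has both its points on it, so the
   set T of its members satisfies |L(T)| <= |T| and tau is not thin. Conversely, if a
   non-empty T in tau has |L(T)| <= |T|, deleting the edge at a leaf keeps this inequality,
   so leaf deletion ends in a non-empty subfamily of minimum degree 2. A longest path in it
   closes to a cycle, whose subdivision is a cycle in G(tau). *)

lemma mod_succ_inj:
  fixes a b n :: nat
  assumes "a < n" "b < n" "(a + 1) mod n = (b + 1) mod n"
  shows "a = b"
proof -
  have "(i + 1) mod n = (if i + 1 = n then 0 else i + 1)" if "i < n" for i
    using that by (simp add: mod_if)
  then show ?thesis using assms by (auto split: if_splits)
qed

lemma mod_succ_succ_neq:
  fixes i n :: nat
  assumes "3 \<le> n" "i < n"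
  shows "((i + 1) mod n + 1) mod n \<noteq> i"
proof -
  have "((i + 1) mod n + 1) mod n = (i + 2) mod n"
    by (simp add: mod_Suc_eq)
  moreover have "(i + 2) mod n \<noteq> i"
  proof (cases "i + 2 < n")
    case False
    then have "(i + 2) mod n = i + 2 - n"
      using assms by (simp add: mod_if)
    then show ?thesis using assms False by linarith
  qed simp
  ultimately show ?thesis by simp
qed

lemma mod_pred_succ:
  fixes i n :: nat
  assumes "i < n"
  shows "((i + n - 1) mod n + 1) mod n = i"
proof -
  have "((i + n - 1) mod n + 1) mod n = (i + n - 1 + 1) mod n"
    by (simp add: mod_Suc_eq)
  also have "\<dots> = i" using assms by simp
  finally show ?thesis .
qed

lemma has_cycle_mono:
  assumes "has_cycle adj" "\<And>u v. adj u v \<Longrightarrow> adj' u v"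
  shows "has_cycle adj'"
  using assms unfolding has_cycle_def by meson

lemma cycle_two_neighbours:
  assumes "3 \<le> length vs" "distinct vs"
    and cyc: "\<forall>i < length vs. adj (vs ! i) (vs ! ((i + 1) mod length vs))"
    and i: "i < length vs"
  obtains j k where "j < length vs" "k < length vs" "vs ! j \<noteq> vs ! k"
    "adj (vs ! i) (vs ! j)" "adj (vs ! k) (vs ! i)"
proof
  let ?n = "length vs"
  have n0: "0 < ?n" using i by linarith
  then show "(i + 1) mod ?n < ?n" "(i + ?n - 1) mod ?n < ?n" by simp_all
  show "adj (vs ! i) (vs ! ((i + 1) mod ?n))" using cyc i by blast
  show "adj (vs ! ((i + ?n - 1) mod ?n)) (vs ! i)"
    using cyc[rule_format, of "(i + ?n - 1) mod ?n"] mod_pred_succ[OF i] n0 by simp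
  have "(i + 1) mod ?n \<noteq> (i + ?n - 1) mod ?n"
    using mod_succ_succ_neq[OF assms(1) i] mod_pred_succ[OF i] by metis
  then show "vs ! ((i + 1) mod ?n) \<noteq> vs ! ((i + ?n - 1) mod ?n)"
    using nth_eq_iff_index_eq[OF assms(2)] n0 by simp
qed

lemma G_adj_Inl_left: "G_adj \<tau> (Inl t) v \<longleftrightarrow> t \<in> \<tau> \<and> (\<exists>x\<in>t. v = Inr x)"
  unfolding G_adj_def by auto

lemma G_adj_Inl_right: "G_adj \<tau> u (Inl t) \<longleftrightarrow> t \<in> \<tau> \<and> (\<exists>x\<in>t. u = Inr x)"
  unfolding G_adj_def by auto

lemma G_adj_Inr_left: "G_adj \<tau> (Inr x) v \<longleftrightarrow> (\<exists>t\<in>\<tau>. x \<in> t \<and> v = Inl t)"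
  unfolding G_adj_def by auto

lemma card_Inr_le_card_Inl_if_succ_Inl:
  assumes dist: "distinct vs"
    and succ: "\<And>i x. i < length vs \<Longrightarrow> vs ! i = Inr x \<Longrightarrow>
      \<exists>t. vs ! ((i + 1) mod length vs) = Inl t"
  shows "card (Inr -` set vs) \<le> card (Inl -` set vs)"
proof -
  let ?n = "length vs"
  let ?next = "\<lambda>i. vs ! ((i + 1) mod ?n)"
  define I where "I = {i. i < ?n \<and> (\<exists>x. vs ! i = Inr x)}"
  have finI: "finite I" unfolding I_def by simp
  have succ_I: "\<exists>t. ?next i = Inl t" if "i \<in> I" for i
    using that succ unfolding I_def by blast
  have "Inr -` set vs \<subseteq> (\<lambda>i. projr (vs ! i)) ` I"
    unfolding I_def by (force simp: in_set_conv_nth)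
  then have "card (Inr -` set vs) \<le> card ((\<lambda>i. projr (vs ! i)) ` I)"
    using finI by (intro card_mono) auto
  also have "\<dots> \<le> card I"
    using finI by (rule card_image_le)
  also have "card I \<le> card (Inl -` set vs)"
  proof (rule card_inj_on_le)
    show "inj_on (\<lambda>i. projl (?next i)) I"
    proof (rule inj_onI)
      fix i j assume i: "i \<in> I" and j: "j \<in> I" and eq: "projl (?next i) = projl (?next j)"
      have ij: "i < ?n" "j < ?n" using i j unfolding I_def by auto
      then have n0: "0 < ?n" by linarith
      from succ_I[OF i] succ_I[OF j] eq have "?next i = ?next j" by auto
      then have "(i + 1) mod ?n = (j + 1) mod ?n"
        using nth_eq_iff_index_eq[OF dist] n0 by simp
      then show "i = j" using mod_succ_inj ij by blast
    qed
    show "(\<lambda>i. projl (?next i)) ` I \<subseteq> Inl -` set vs"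
    proof
      fix t assume "t \<in> (\<lambda>i. projl (?next i)) ` I"
      then obtain i where i: "i \<in> I" and t: "t = projl (?next i)" by blast
      then have "0 < ?n" unfolding I_def by auto
      then have "?next i \<in> set vs" by simp
      then show "t \<in> Inl -` set vs" using succ_I[OF i] t by auto
    qed
    show "finite (Inl -` set vs)" by (simp add: finite_vimageI)
  qed
  finally show ?thesis .
qed

lemma subfamily_card_Union_le_if_has_cycle_G_adj:
  assumes two: "\<forall>t\<in>\<tau>. card t = 2" and cyc: "has_cycle (G_adj \<tau>)"
  obtains T where "T \<subseteq> \<tau>" "T \<noteq> {}" "card (\<Union>T) \<le> card T"
proof -
  obtain vs where n3: "3 \<le> length vs" and dist: "distinct vs"
    and adj: "\<forall>i < length vs. G_adj \<tau> (vs ! i) (vs ! ((i + 1) mod length vs))"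
    using cyc unfolding has_cycle_def by blast
  let ?n = "length vs"
  have n0: "0 < ?n" using n3 by linarith
  have succ_Inr: "\<exists>t. vs ! ((i + 1) mod ?n) = Inl t" if i: "i < ?n" "vs ! i = Inr x" for i x
  proof -
    have "G_adj \<tau> (vs ! i) (vs ! ((i + 1) mod ?n))" using adj i(1) by blast
    then show ?thesis using i(2) by (auto simp: G_adj_Inr_left)
  qed
  have sub: "Inl -` set vs \<subseteq> \<tau>"
  proof
    fix t assume "t \<in> Inl -` set vs"
    then obtain i where i: "i < ?n" "vs ! i = Inl t" by (auto simp: in_set_conv_nth)
    then have "G_adj \<tau> (vs ! i) (vs ! ((i + 1) mod ?n))" using adj by blast
    then show "t \<in> \<tau>" using i(2) by (simp add: G_adj_Inl_left)
  qed
  have ne: "Inl -` set vs \<noteq> {}"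
  proof (cases "vs ! 0")
    case (Inl t)
    moreover have "vs ! 0 \<in> set vs" using n0 by simp
    ultimately show ?thesis by auto
  next
    case (Inr x)
    then obtain t where "vs ! (1 mod ?n) = Inl t" using succ_Inr[of 0 x] n0 by auto
    moreover have "vs ! (1 mod ?n) \<in> set vs" using nth_mem[OF mod_less_divisor[OF n0]] .
    ultimately show ?thesis by auto
  qed
  have "\<Union>(Inl -` set vs) \<subseteq> Inr -` set vs"
  proof
    fix x assume "x \<in> \<Union>(Inl -` set vs)"
    then obtain t i where x: "x \<in> t" and i: "i < ?n" "vs ! i = Inl t"
      by (auto simp: in_set_conv_nth)
    obtain j k where jk: "j < ?n" "k < ?n" "vs ! j \<noteq> vs ! k"
      "G_adj \<tau> (vs ! i) (vs ! j)" "G_adj \<tau> (vs ! k) (vs ! i)"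
      by (rule cycle_two_neighbours[OF n3 dist adj i(1)])
    then obtain a b where ab: "vs ! j = Inr a" "vs ! k = Inr b" "a \<in> t" "b \<in> t" "t \<in> \<tau>"
      unfolding i(2) by (auto simp: G_adj_Inl_left G_adj_Inl_right)
    have "a \<noteq> b" using ab jk(3) by auto
    moreover have "card t = 2" using two ab(5) by blast
    ultimately have "t = {a, b}" using ab(3,4) unfolding card_2_iff by auto
    moreover have "vs ! j \<in> set vs" "vs ! k \<in> set vs" using jk(1,2) by simp_all
    ultimately show "x \<in> Inr -` set vs" using x ab(1,2) by auto
  qed
  then have "card (\<Union>(Inl -` set vs)) \<le> card (Inr -` set vs)"
    by (intro card_mono finite_vimageI) auto
  also have "\<dots> \<le> card (Inl -` set vs)"
    by (rule card_Inr_le_card_Inl_if_succ_Inl[OF dist succ_Inr])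
  finally show thesis by (rule that[OF sub ne])
qed

lemma card_2_other:
  assumes "card e = 2" "x \<in> e"
  obtains y where "e = {y, x}" "y \<noteq> x"
  using assms unfolding card_2_iff by auto

definition min_degree_2 :: "'a set set \<Rightarrow> bool" where
  "min_degree_2 E \<longleftrightarrow> (\<forall>x\<in>\<Union>E. \<exists>e1\<in>E. \<exists>e2\<in>E. e1 \<noteq> e2 \<and> x \<in> e1 \<and> x \<in> e2)"

lemma finite_Union_card_2:
  assumes "finite E" "\<forall>e\<in>E. card e = 2"
  shows "finite (\<Union>E)"
  using assms by (intro finite_Union) (auto intro: card_ge_0_finite)

lemma min_degree_2_subfamily:
  assumes "finite E" "\<forall>e\<in>E. card e = 2" "E \<noteq> {}" "card (\<Union>E) \<le> card E"
  shows "\<exists>F\<subseteq>E. F \<noteq> {} \<and> min_degree_2 F"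
  using assms
proof (induction "card E" arbitrary: E rule: less_induct)
  case less
  show ?case
  proof (cases "min_degree_2 E")
    case False
    then obtain x where "x \<in> \<Union>E" and not2: "\<not> (\<exists>e1\<in>E. \<exists>e2\<in>E. e1 \<noteq> e2 \<and> x \<in> e1 \<and> x \<in> e2)"
      unfolding min_degree_2_def by blast
    then obtain e where x: "x \<in> e" "e \<in> E" by blast
    with not2 have leaf: "\<And>e'. e' \<in> E \<Longrightarrow> x \<in> e' \<Longrightarrow> e' = e" by blast
    define E' where "E' = E - {e}"
    have "\<Union>E' \<subseteq> \<Union>E - {x}" unfolding E'_def using leaf by blast
    then have "card (\<Union>E') \<le> card (\<Union>E - {x})"
      using finite_Union_card_2[OF less.prems(1,2)] by (intro card_mono) auto
    also have "\<dots> = card (\<Union>E) - 1" using \<open>x \<in> \<Union>E\<close> by (rule card_Diff_singleton)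
    also have "\<dots> \<le> card E - 1" using less.prems(4) by simp
    also have "\<dots> = card E'" unfolding E'_def using x(2) by simp
    finally have "card (\<Union>E') \<le> card E'" .
    moreover have "E' \<noteq> {}"
    proof
      assume "E' = {}"
      then have "E = {e}" using x(2) unfolding E'_def by blast
      then show False using less.prems(2,4) by simp
    qed
    moreover have "card E' < card E"
      unfolding E'_def using less.prems(1) x(2) by (rule card_Diff1_less)
    ultimately have "\<exists>F\<subseteq>E'. F \<noteq> {} \<and> min_degree_2 F"
      using less.prems(1,2) by (intro less.hyps) (auto simp: E'_def)
    then show ?thesis unfolding E'_def by blast
  qed (use less.prems(3) in blast)
qed

definition edge_path :: "'a set set \<Rightarrow> 'a list \<Rightarrow> bool" where
  "edge_path E xs \<longleftrightarrow> distinct xs \<and> (\<forall>i. Suc i < length xs \<longrightarrow> {xs ! i, xs ! Suc i} \<in> E)"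

lemma edge_path_Cons:
  assumes "edge_path E xs" "y \<notin> set xs" "{y, xs ! 0} \<in> E"
  shows "edge_path E (y # xs)"
  using assms unfolding edge_path_def by (auto simp: nth_Cons split: nat.split)

lemma has_cycle_if_edge_path_closes:
  assumes path: "edge_path E xs" and j: "2 \<le> j" "j < length xs" and closing: "{xs ! j, xs ! 0} \<in> E"
  shows "has_cycle (\<lambda>x y. {x, y} \<in> E)"
  unfolding has_cycle_def
proof (intro exI conjI allI impI)
  let ?cs = "take (Suc j) xs"
  show "3 \<le> length ?cs" "distinct ?cs" using j path unfolding edge_path_def by auto
  fix i assume i: "i < length ?cs"
  show "{?cs ! i, ?cs ! ((i + 1) mod length ?cs)} \<in> E"
  proof (cases "i < j")
    case True
    then show ?thesis using path j unfolding edge_path_def by simp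
  next
    case False
    then have "i = j" using i j by simp
    then show ?thesis using closing j by simp
  qed
qed

lemma min_degree_2_other_neighbour:
  assumes two: "\<forall>e\<in>E. card e = 2" and deg: "min_degree_2 E" and x: "x \<in> \<Union>E"
  obtains y where "{y, x} \<in> E" "y \<noteq> x" "y \<noteq> z"
proof -
  obtain e1 e2 where e12: "e1 \<in> E" "e2 \<in> E" "e1 \<noteq> e2" "x \<in> e1" "x \<in> e2"
    using deg x unfolding min_degree_2_def by blast
  obtain a1 where a1: "e1 = {a1, x}" "a1 \<noteq> x"
    by (rule card_2_other[of e1 x]) (use two e12 in auto)
  obtain a2 where a2: "e2 = {a2, x}" "a2 \<noteq> x"
    by (rule card_2_other[of e2 x]) (use two e12 in auto)
  have "a1 \<noteq> a2" using a1(1) a2(1) e12(3) by auto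
  then obtain y where y: "y \<in> {a1, a2}" "y \<noteq> z" by auto
  moreover from y have "{y, x} \<in> E"
    using e12(1,2) by (cases "y = a1") (simp_all add: a1(1) a2(1))
  moreover from y have "y \<noteq> x" using a1(2) a2(2) by auto
  ultimately show thesis using that by blast
qed

lemma ex_longest_edge_path:
  assumes two: "\<forall>e\<in>E. card e = 2" and fin: "finite E" and "E \<noteq> {}"
  obtains xs where "edge_path E xs" "set xs \<subseteq> \<Union>E" "2 \<le> length xs"
    "\<And>ys. edge_path E ys \<Longrightarrow> set ys \<subseteq> \<Union>E \<Longrightarrow> length ys \<le> length xs"
proof -
  let ?P = "\<lambda>xs. edge_path E xs \<and> set xs \<subseteq> \<Union>E"
  obtain e where e: "e \<in> E" using \<open>E \<noteq> {}\<close> by blast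
  with two obtain a b where "e = {a, b}" "a \<noteq> b" unfolding card_2_iff by blast
  with e have P_ab: "?P [a, b]" unfolding edge_path_def by auto
  have "length xs < card (\<Union>E) + 1" if "?P xs" for xs
  proof -
    have "length xs = card (set xs)" using that by (simp add: edge_path_def distinct_card)
    also have "\<dots> \<le> card (\<Union>E)"
      using that finite_Union_card_2[OF fin two] by (intro card_mono) auto
    finally show ?thesis by simp
  qed
  with P_ab have "\<exists>xs. ?P xs \<and> (\<forall>ys. ?P ys \<longrightarrow> length ys \<le> length xs)"
    by (intro ex_has_greatest_nat) auto
  then obtain xs where "?P xs" and longest: "\<forall>ys. ?P ys \<longrightarrow> length ys \<le> length xs"
    by blast
  moreover have "2 \<le> length xs" using longest P_ab by fastforce
  ultimately show thesis using that by blast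
qed

lemma has_cycle_if_min_degree_2:
  assumes two: "\<forall>e\<in>E. card e = 2" and fin: "finite E" and "E \<noteq> {}" and deg: "min_degree_2 E"
  shows "has_cycle (\<lambda>x y. {x, y} \<in> E)"
proof -
  obtain xs where path: "edge_path E xs" and sub: "set xs \<subseteq> \<Union>E" and len: "2 \<le> length xs"
    and longest: "\<And>ys. edge_path E ys \<Longrightarrow> set ys \<subseteq> \<Union>E \<Longrightarrow> length ys \<le> length xs"
    using ex_longest_edge_path[OF two fin \<open>E \<noteq> {}\<close>] by blast
  have "xs ! 0 \<in> set xs" using len by (intro nth_mem) linarith
  with sub have "xs ! 0 \<in> \<Union>E" by blast
  then obtain y where edge: "{y, xs ! 0} \<in> E" and y0: "y \<noteq> xs ! 0" and y1: "y \<noteq> xs ! 1"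
    by (rule min_degree_2_other_neighbour[OF two deg])
  have "y \<in> set xs"
  proof (rule ccontr)
    assume "y \<notin> set xs"
    then have "edge_path E (y # xs)" using path edge by (intro edge_path_Cons)
    moreover have "set (y # xs) \<subseteq> \<Union>E" using sub edge by auto
    ultimately show False using longest[of "y # xs"] by simp
  qed
  then obtain j where j: "j < length xs" "xs ! j = y" by (auto simp: in_set_conv_nth)
  have "j \<notin> {0, 1}" using j(2) y0 y1 by blast
  then have "2 \<le> j" by auto
  moreover have "{xs ! j, xs ! 0} \<in> E" using edge j(2) by simp
  ultimately show ?thesis using path j(1) has_cycle_if_edge_path_closes by blast
qed

definition subdivision :: "'a list \<Rightarrow> ('a set + 'a) list" where
  "subdivision cs = map (\<lambda>k. if even k then Inr (cs ! (k div 2))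
      else Inl {cs ! (k div 2), cs ! ((k div 2 + 1) mod length cs)}) [0..<2 * length cs]"

lemma length_subdivision [simp]: "length (subdivision cs) = 2 * length cs"
  by (simp add: subdivision_def)

lemma nth_subdivision:
  "k < 2 * length cs \<Longrightarrow> subdivision cs ! k = (if even k then Inr (cs ! (k div 2))
      else Inl {cs ! (k div 2), cs ! ((k div 2 + 1) mod length cs)})"
  by (simp add: subdivision_def)

lemma distinct_subdivision:
  assumes dist: "distinct cs" and n3: "3 \<le> length cs"
  shows "distinct (subdivision cs)"
proof -
  let ?n = "length cs"
  have cs_eq: "cs ! i = cs ! j \<longleftrightarrow> i = j" if "i < ?n" "j < ?n" for i j
    using nth_eq_iff_index_eq[OF dist that] .
  have "k = l" if kl: "k < 2 * ?n" "l < 2 * ?n" "subdivision cs ! k = subdivision cs ! l" for k l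
  proof -
    define i j where "i = k div 2" and "j = l div 2"
    have ij: "i < ?n" "j < ?n" "(i + 1) mod ?n < ?n" "(j + 1) mod ?n < ?n"
      using kl(1,2) n3 unfolding i_def j_def by (auto intro: mod_less_divisor)
    have "i = j \<and> (even k \<longleftrightarrow> even l)"
    proof (cases "even k"; cases "even l")
      assume "odd k" "odd l"
      then have "{cs ! i, cs ! ((i + 1) mod ?n)} = {cs ! j, cs ! ((j + 1) mod ?n)}"
        using kl unfolding i_def j_def by (simp add: nth_subdivision)
      then have "i = j \<or> (i = (j + 1) mod ?n \<and> (i + 1) mod ?n = j)"
        using ij cs_eq by (auto simp: doubleton_eq_iff)
      then show ?thesis
        using mod_succ_succ_neq[OF n3 ij(2)] \<open>odd k\<close> \<open>odd l\<close> by auto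
    qed (use kl cs_eq ij in \<open>auto simp: nth_subdivision i_def j_def\<close>)
    then show "k = l" unfolding i_def j_def by presburger
  qed
  then show ?thesis by (auto simp: distinct_conv_nth)
qed

lemma G_adj_subdivision:
  assumes edges: "\<forall>i < length cs. {cs ! i, cs ! ((i + 1) mod length cs)} \<in> \<tau>"
    and k: "k < 2 * length cs"
  shows "G_adj \<tau> (subdivision cs ! k) (subdivision cs ! ((k + 1) mod (2 * length cs)))"
proof -
  let ?n = "length cs"
  define i where "i = k div 2"
  have i: "i < ?n" using k unfolding i_def by auto
  then have edge: "{cs ! i, cs ! ((i + 1) mod ?n)} \<in> \<tau>" using edges by blast
  show ?thesis
  proof (cases "even k")
    case True
    have next_k: "k + 1 < 2 * ?n" using True k by presburger
    then have "(k + 1) mod (2 * ?n) = k + 1" by simp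
    moreover have "(k + 1) div 2 = i" using True unfolding i_def by presburger
    ultimately show ?thesis using True k next_k edge
      by (simp add: nth_subdivision i_def G_adj_Inl_right)
  next
    case False
    then have "(k + 1) mod (2 * ?n) = 2 * ((i + 1) mod ?n)"
      unfolding i_def by (simp add: mult_mod_right)
    moreover have "(i + 1) mod ?n < ?n" using i by (intro mod_less_divisor) linarith
    ultimately show ?thesis
      using False k edge by (simp add: nth_subdivision i_def G_adj_Inl_left)
  qed
qed

lemma has_cycle_G_adj_if_has_cycle_edges:
  assumes "has_cycle (\<lambda>x y. {x, y} \<in> \<tau>)"
  shows "has_cycle (G_adj \<tau>)"
proof -
  obtain cs where n3: "3 \<le> length cs" and "distinct cs"
    and edges: "\<forall>i < length cs. {cs ! i, cs ! ((i + 1) mod length cs)} \<in> \<tau>"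
    using assms unfolding has_cycle_def by blast
  then have "distinct (subdivision cs)" by (intro distinct_subdivision)
  then show ?thesis
    unfolding has_cycle_def using n3 G_adj_subdivision[OF edges]
    by (intro exI[of _ "subdivision cs"]) auto
qed

theorem thin_iff_is_forest_G_adj:
  assumes fin: "finite \<tau>" and two: "\<forall>t\<in>\<tau>. card t = 2"
  shows "thin \<tau> \<longleftrightarrow> is_forest (G_adj \<tau>)"
proof
  assume thin: "thin \<tau>"
  show "is_forest (G_adj \<tau>)" unfolding is_forest_def
  proof
    assume "has_cycle (G_adj \<tau>)"
    then obtain T where "T \<subseteq> \<tau>" "T \<noteq> {}" and T_card: "card (\<Union>T) \<le> card T"
      by (rule subfamily_card_Union_le_if_has_cycle_G_adj[OF two])
    with thin have "card T + 1 \<le> card (\<Union>T)" unfolding thin_def L_def by blast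
    with T_card show False by linarith
  qed
next
  assume forest: "is_forest (G_adj \<tau>)"
  show "thin \<tau>" unfolding thin_def
  proof (intro allI impI, rule ccontr)
    fix T assume T: "T \<subseteq> \<tau> \<and> T \<noteq> {}" and "\<not> card T + 1 \<le> card (L T)"
    then have "card (\<Union>T) \<le> card T" unfolding L_def by simp
    moreover have "finite T" "\<forall>e\<in>T. card e = 2" using T fin two finite_subset by blast+
    ultimately obtain F where F: "F \<subseteq> T" "F \<noteq> {}" "min_degree_2 F"
      using T min_degree_2_subfamily[of T] by auto
    then have "has_cycle (\<lambda>x y. {x, y} \<in> F)"
      using \<open>finite T\<close> \<open>\<forall>e\<in>T. card e = 2\<close> finite_subset
      by (intro has_cycle_if_min_degree_2) auto
    then have "has_cycle (\<lambda>x y. {x, y} \<in> \<tau>)" by (rule has_cycle_mono) (use F(1) T in blast)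
    then show False
      using forest has_cycle_G_adj_if_has_cycle_edges unfolding is_forest_def by blast
  qed
qed

theorem corollary2:
  fixes X :: "'a set" and \<tau> :: "'a set set"
  assumes "finite X"
    and "\<tau> \<subseteq> {s. s \<subseteq> X \<and> card s = 2}"
    and "\<tau> \<noteq> {}"
    and "L \<tau> = X"
  shows "thin \<tau> \<longleftrightarrow> is_forest (G_adj \<tau>)"
proof (rule thin_iff_is_forest_G_adj)
  have "\<tau> \<subseteq> Pow X" using assms(2) by blast
  then show "finite \<tau>" using assms(1) by (simp add: finite_subset)
  show "\<forall>t\<in>\<tau>. card t = 2" using assms(2) by blast
qed

end
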